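(* Let $N>3$. The maximum, over all behaviors $P\in\mathcal{J}_{N,2}$, of $$\frac{1}{N+1}P(0|0\cdots0)+\frac{1}{N+1}\sum_{k=1}^NP(1|e_k)-\frac{N}{N+1}$$ equals $$|\delta_{I2}|=\frac{2}{(N-2)(N-1)(N+1)},$$ and it is achieved by a behavior in $\mathcal{J}_{N,2}$ with $P(0|0\cdots0)=\frac{2}{N^2-3N+2}$ and $P(1|e_k)=1$ for all $k=1,\dots,N$.
   Context: A behavior on $N$ bits is a family $(P(a|\mathbf{x}))_{a\in\{0,1\},\mathbf{x}\in\{0,1\}^N}$ with $P(a|\mathbf{x})\ge0$ and $P(0|\mathbf{x})+P(1|\mathbf{x})=1$. $\mathcal{J}_{N,2}$ (the second-order interference set) is the set of behaviors satisfying, for every $M>2$, every subset $\{j_1,\dots,j_M\}\subseteq\{1,\dots,N\}$ and every fixed value of the remaining bits, $\sum_{x_{j_1},\dots,x_{j_M}\in\{0,1\}}(-1)^{\sum_lx_{j_l}}P(0|\mathbf{x})=0$. $e_k\in\{0,1\}^N$ is the string with a single $1$ in position $k$. *)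

theory Defs
  imports Complex_Main
begin

text \<open>A bit string x in {0,1}^N is encoded as the set of positions (in {1..N}) where it is 1.
  A behavior is P :: nat \<Rightarrow> nat set \<Rightarrow> real, with P a x the probability of outcome a \<in> {0,1}.\<close>

definition behavior :: "nat \<Rightarrow> (nat \<Rightarrow> nat set \<Rightarrow> real) \<Rightarrow> bool" where
  "behavior N P \<longleftrightarrow> (\<forall>x. x \<subseteq> {1..N} \<longrightarrow>
      P 0 x \<ge> 0 \<and> P 1 x \<ge> 0 \<and> P 0 x + P 1 x = 1)"

definition J2 :: "nat \<Rightarrow> (nat \<Rightarrow> nat set \<Rightarrow> real) set" where
  "J2 N = {P. behavior N P \<and>
     (\<forall>J R. J \<subseteq> {1..N} \<longrightarrow> card J > 2 \<longrightarrow> R \<subseteq> {1..N} - J \<longrightarrow>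
        (\<Sum>S\<in>Pow J. (-1::real) ^ card S * P 0 (R \<union> S)) = 0)}"

definition objective :: "nat \<Rightarrow> (nat \<Rightarrow> nat set \<Rightarrow> real) \<Rightarrow> real" where
  "objective N P = P 0 {} / (real N + 1) + (\<Sum>k=1..N. P 1 {k}) / (real N + 1)
      - real N / (real N + 1)"

end

theory Submission
  imports Defs "HOL-Computational_Algebra.Polynomial"
begin

(* Write f(x) = P(0|x) and view it as a function on subsets of {1..N}. The interference
   constraints with the remaining bits all 0 say exactly that the Moebius transform of f
   vanishes on sets of more than two elements. Hence the level sums of f over sets of size
   0, 1, 2 and N are linear in the level sums G0, G1, G2 of its Moebius transform, and
   eliminating them gives
     (N-1)(N-2) (f({}) - sum_k f({k})) = 2 f({1..N}) - 2 sum_{|x|=2} f(x) - (N-3)(N-2) sum_k f({k}),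
   whose right-hand side is at most 2 for a behavior. Equality holds for
   f(x) = (|x|-1)(|x|-2) / ((N-1)(N-2)); it satisfies all constraints because the alternating
   sum over a cube of a polynomial in |x| of degree less than the dimension vanishes. *)

lemma card_insert_Pow:
  assumes "finite J" "a \<notin> J" "S \<in> Pow J"
  shows "card (insert a S) = Suc (card S)"
proof -
  have "finite S" "a \<notin> S"
    using assms rev_finite_subset[OF assms(1)] by auto
  then show ?thesis
    by simp
qed

lemma sum_Pow_insert_alternating:
  fixes F :: "'a set \<Rightarrow> 'b::comm_ring_1"
  assumes "finite J" "a \<notin> J"
  shows "(\<Sum>S\<in>Pow (insert a J). (-1) ^ card S * F S)
       = (\<Sum>S\<in>Pow J. (-1) ^ card S * (F S - F (insert a S)))"
proof -
  have "inj_on (insert a) (Pow J)"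
    using assms by (intro inj_onI) (auto simp: insert_ident)
  moreover have "Pow J \<inter> insert a ` Pow J = {}"
    using assms by auto
  ultimately have "(\<Sum>S\<in>Pow (insert a J). (-1) ^ card S * F S)
      = (\<Sum>S\<in>Pow J. (-1) ^ card S * F S) + (\<Sum>S\<in>Pow J. (-1) ^ card (insert a S) * F (insert a S))"
    using assms unfolding Pow_insert by (simp add: sum.union_disjoint sum.reindex)
  also have "(\<Sum>S\<in>Pow J. (-1) ^ card (insert a S) * F (insert a S))
      = - (\<Sum>S\<in>Pow J. (-1) ^ card S * F (insert a S))"
    using card_insert_Pow[OF assms] by (simp add: sum_negf[symmetric])
  also have "(\<Sum>S\<in>Pow J. (-1) ^ card S * F S) + - (\<Sum>S\<in>Pow J. (-1) ^ card S * F (insert a S))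
      = (\<Sum>S\<in>Pow J. (-1) ^ card S * (F S - F (insert a S)))"
    by (simp add: sum_subtractf right_diff_distrib)
  finally show ?thesis .
qed

lemma degree_diff_pcompose_shift_less:
  fixes p :: "'a::idom poly"
  assumes "degree p > 0"
  shows "degree (p - pcompose p [:c, 1:]) < degree p"
proof -
  let ?q = "pcompose p [:c, 1:]"
  have degree_q: "degree ?q = degree p"
    by (simp add: degree_pcompose)
  moreover have "lead_coeff ?q = lead_coeff p"
    by (simp add: lead_coeff_comp)
  ultimately have coeff_top: "coeff (p - ?q) (degree p) = 0"
    by simp
  have "degree (p - ?q) \<noteq> degree p"
  proof
    assume degree_eq: "degree (p - ?q) = degree p"
    then have "p - ?q = 0"
      using coeff_top leading_coeff_0_iff by metis
    with degree_eq assms show False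
      by simp
  qed
  moreover have "degree (p - ?q) \<le> degree p"
    using degree_q by (simp add: degree_diff_le)
  ultimately show ?thesis
    by simp
qed

lemma sum_Pow_alternating_poly_card:
  fixes p :: "'a::idom poly"
  assumes "finite J" "degree p < card J"
  shows "(\<Sum>S\<in>Pow J. (-1) ^ card S * poly p (of_nat (card S))) = 0"
  using assms
proof (induction J arbitrary: p rule: finite_induct)
  case empty
  then show ?case by simp
next
  case (insert a J)
  let ?q = "p - pcompose p [:1, 1:]"
  have "(\<Sum>S\<in>Pow (insert a J). (-1) ^ card S * poly p (of_nat (card S)))
      = (\<Sum>S\<in>Pow J. (-1) ^ card S * poly ?q (of_nat (card S)))"
    unfolding sum_Pow_insert_alternating[OF insert.hyps]
  proof (rule sum.cong[OF refl])
    fix S assume "S \<in> Pow J"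
    then show "(-1) ^ card S * (poly p (of_nat (card S)) - poly p (of_nat (card (insert a S))))
        = (-1) ^ card S * poly ?q (of_nat (card S))"
      by (simp add: card_insert_Pow[OF insert.hyps] poly_pcompose add.commute)
  qed
  also have "\<dots> = 0"
  proof (cases "degree p = 0")
    case True
    then show ?thesis by (auto elim: degree_eq_zeroE)
  next
    case False
    then have "degree ?q < card J"
      using degree_diff_pcompose_shift_less[of p 1] insert by simp
    then show ?thesis by (rule insert.IH)
  qed
  finally show ?case .
qed

definition moebius :: "('a set \<Rightarrow> 'b::ring_1) \<Rightarrow> 'a set \<Rightarrow> 'b" where
  "moebius f T = (-1) ^ card T * (\<Sum>S\<in>Pow T. (-1) ^ card S * f S)"

lemma sum_Pow_moebius:
  assumes "finite S"
  shows "(\<Sum>T\<in>Pow S. moebius f T) = f S"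
  unfolding moebius_def by (rule inclusion_exclusion_symmetric[symmetric]) (use assms in auto)

definition level_sum :: "'a set \<Rightarrow> nat \<Rightarrow> ('a set \<Rightarrow> 'b::comm_monoid_add) \<Rightarrow> 'b" where
  "level_sum X k f = (\<Sum>S | S \<subseteq> X \<and> card S = k. f S)"

lemma level_sum_0:
  assumes "finite X"
  shows "level_sum X 0 f = f {}"
proof -
  have "{S. S \<subseteq> X \<and> card S = 0} = {{}}"
    using assms by (auto dest: finite_subset)
  then show ?thesis by (simp add: level_sum_def)
qed

lemma level_sum_1: "level_sum X 1 f = (\<Sum>x\<in>X. f {x})"
proof -
  have "{S. S \<subseteq> X \<and> card S = 1} = (\<lambda>x. {x}) ` X"
    by (auto simp: card_1_singleton_iff)
  then show ?thesis by (simp add: level_sum_def sum.reindex)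
qed

lemma level_sum_card:
  assumes "finite X"
  shows "level_sum X (card X) f = f X"
proof -
  have "{S. S \<subseteq> X \<and> card S = card X} = {X}"
    using assms by (auto dest: card_subset_eq)
  then show ?thesis by (simp add: level_sum_def)
qed

lemma card_supersets_with_card:
  assumes "finite X" "T \<subseteq> X"
  shows "card {P. P \<subseteq> X \<and> card P = k \<and> T \<subseteq> P}
       = (if card T \<le> k then (card X - card T) choose (k - card T) else 0)"
proof (cases "card T \<le> k")
  case True
  have "finite T"
    using assms finite_subset by blast
  have "bij_betw (\<lambda>Q. Q \<union> T) {Q. Q \<subseteq> X - T \<and> card Q = k - card T}
      {P. P \<subseteq> X \<and> card P = k \<and> T \<subseteq> P}"
  proof (rule bij_betw_byWitness[where f' = "\<lambda>P. P - T"])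
    show "(\<lambda>P. P - T) ` {P. P \<subseteq> X \<and> card P = k \<and> T \<subseteq> P} \<subseteq> {Q. Q \<subseteq> X - T \<and> card Q = k - card T}"
      using \<open>finite T\<close> by (auto simp: card_Diff_subset)
    show "(\<lambda>Q. Q \<union> T) ` {Q. Q \<subseteq> X - T \<and> card Q = k - card T} \<subseteq> {P. P \<subseteq> X \<and> card P = k \<and> T \<subseteq> P}"
      using assms True \<open>finite T\<close>
      by (auto simp: card_Un_disjoint finite_subset[OF _ \<open>finite X\<close>] disjoint_iff subset_iff)
  qed auto
  then have "card {P. P \<subseteq> X \<and> card P = k \<and> T \<subseteq> P} = card {Q. Q \<subseteq> X - T \<and> card Q = k - card T}"
    by (simp add: bij_betw_same_card)
  also have "\<dots> = (card X - card T) choose (k - card T)"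
    using assms \<open>finite T\<close> by (simp add: n_subsets card_Diff_subset)
  finally show ?thesis
    using True by simp
next
  case False
  then have "{P. P \<subseteq> X \<and> card P = k \<and> T \<subseteq> P} = {}"
    using assms by (auto dest: card_mono[OF finite_subset])
  with False show ?thesis
    by (simp only: card.empty if_False)
qed

lemma level_sum_moebius:
  fixes f :: "'a set \<Rightarrow> 'b::comm_ring_1"
  assumes "finite X"
  shows "level_sum X k f = (\<Sum>j\<le>k. of_nat ((card X - j) choose (k - j)) * level_sum X j (moebius f))"
proof -
  let ?A = "{P. P \<subseteq> X \<and> card P = k}"
  let ?c = "\<lambda>T. of_nat ((card X - card T) choose (k - card T)) :: 'b"
  have fin: "finite ?A" "finite (Pow X)"
    using assms by (auto intro: finite_subset[of _ "Pow X"])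
  have "level_sum X k f = (\<Sum>P\<in>?A. \<Sum>T\<in>{T\<in>Pow X. T \<subseteq> P}. moebius f T)"
    unfolding level_sum_def
  proof (rule sum.cong[OF refl])
    fix P assume "P \<in> ?A"
    then have "{T\<in>Pow X. T \<subseteq> P} = Pow P" and "finite P"
      using assms finite_subset by auto
    then show "f P = (\<Sum>T\<in>{T\<in>Pow X. T \<subseteq> P}. moebius f T)"
      by (simp add: sum_Pow_moebius)
  qed
  also have "\<dots> = (\<Sum>T\<in>Pow X. \<Sum>P\<in>{P\<in>?A. T \<subseteq> P}. moebius f T)"
    using fin by (rule sum.swap_restrict)
  also have "\<dots> = (\<Sum>T\<in>Pow X. of_nat (card {P. P \<subseteq> X \<and> card P = k \<and> T \<subseteq> P}) * moebius f T)"
    by (intro sum.cong refl) simp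
  also have "\<dots> = (\<Sum>T\<in>Pow X. if card T \<le> k then ?c T * moebius f T else 0)"
    using assms by (intro sum.cong refl) (simp add: card_supersets_with_card)
  also have "\<dots> = (\<Sum>T\<in>{T\<in>Pow X. card T \<le> k}. ?c T * moebius f T)"
    using fin by (intro sum.inter_filter[symmetric]) auto
  also have "\<dots> = (\<Sum>j\<le>k. \<Sum>T\<in>{T\<in>{T\<in>Pow X. card T \<le> k}. card T = j}. ?c T * moebius f T)"
    using fin by (intro sum.group[symmetric]) auto
  also have "\<dots> = (\<Sum>j\<le>k. of_nat ((card X - j) choose (k - j)) * level_sum X j (moebius f))"
  proof (rule sum.cong[OF refl])
    fix j assume "j \<in> {..k}"
    then have "{T\<in>{T\<in>Pow X. card T \<le> k}. card T = j} = {T. T \<subseteq> X \<and> card T = j}"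
      by auto
    then show "(\<Sum>T\<in>{T\<in>{T\<in>Pow X. card T \<le> k}. card T = j}. ?c T * moebius f T)
        = of_nat ((card X - j) choose (k - j)) * level_sum X j (moebius f)"
      by (simp add: level_sum_def sum_distrib_left)
  qed
  finally show ?thesis .
qed

lemma level_sums_quadratic_identity:
  fixes f :: "'a set \<Rightarrow> real"
  assumes "finite X" "card X = n" "n \<ge> 2"
    and moebius_vanishes: "\<And>T. T \<subseteq> X \<Longrightarrow> card T > 2 \<Longrightarrow> moebius f T = 0"
  shows "(real n - 1) * (real n - 2) * (f {} - level_sum X 1 f)
       = 2 * f X - 2 * level_sum X 2 f - (real n - 3) * (real n - 2) * level_sum X 1 f"
proof -
  define G where "G j = level_sum X j (moebius f)" for j
  have G_vanishes: "G j = 0" if "j > 2" for j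
    unfolding G_def level_sum_def using moebius_vanishes that by (intro sum.neutral) auto
  have L0: "f {} = G 0"
    using level_sum_moebius[OF assms(1), of 0 f] by (simp add: level_sum_0 assms G_def)
  have L1: "level_sum X 1 f = real n * G 0 + G 1"
    using level_sum_moebius[OF assms(1), of 1 f] by (simp add: assms G_def)
  have L2: "level_sum X 2 f = real n * (real n - 1) / 2 * G 0 + (real n - 1) * G 1 + G 2"
  proof -
    have "2 * (n choose 2) = n * (n - 1)"
      using binomial_absorption[of 1 n] by (simp add: numeral_2_eq_2)
    then have "2 * real (n choose 2) = real n * real (n - 1)"
      by (metis of_nat_mult of_nat_numeral)
    then have "real (n choose 2) = real n * (real n - 1) / 2"
      using assms by simp
    then show ?thesis
      using level_sum_moebius[OF assms(1), of 2 f] assms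
      by (simp add: G_def eval_nat_numeral)
  qed
  have "f X = (\<Sum>j\<le>n. G j)"
    using level_sum_moebius[OF assms(1), of n f] level_sum_card[OF assms(1), of f]
    by (simp add: assms G_def)
  also have "\<dots> = (\<Sum>j\<le>2. G j)"
    using assms G_vanishes by (intro sum.mono_neutral_right) auto
  finally have LX: "f X = G 0 + G 1 + G 2"
    by (simp add: eval_nat_numeral)
  show ?thesis
    unfolding L0 L1 L2 LX by (simp add: field_simps)
qed

lemma objective_eq_of_behavior:
  assumes "behavior N P"
  shows "objective N P = (P 0 {} - (\<Sum>k=1..N. P 0 {k})) / (real N + 1)"
proof -
  have "(\<Sum>k=1..N. P 1 {k}) = (\<Sum>k=1..N. 1 - P 0 {k})"
    using assms by (intro sum.cong) (auto simp: behavior_def eq_diff_eq add.commute)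
  then show ?thesis
    by (simp add: objective_def sum_subtractf diff_divide_distrib add_divide_distrib)
qed

lemma objective_le_of_J2:
  assumes "N \<ge> 3" "P \<in> J2 N"
  shows "objective N P \<le> 2 / ((real N - 2) * (real N - 1) * (real N + 1))"
proof -
  let ?X = "{1..N}"
  let ?f = "P 0"
  have behavior: "behavior N P"
    using assms(2) by (simp add: J2_def)
  have "moebius ?f T = 0" if "T \<subseteq> ?X" "card T > 2" for T
  proof -
    have "(\<Sum>S\<in>Pow T. (-1) ^ card S * ?f ({} \<union> S)) = 0"
      using assms(2) that unfolding J2_def by blast
    then show ?thesis
      by (simp add: moebius_def)
  qed
  then have identity: "(real N - 1) * (real N - 2) * (?f {} - level_sum ?X 1 ?f)
      = 2 * ?f ?X - 2 * level_sum ?X 2 ?f - (real N - 3) * (real N - 2) * level_sum ?X 1 ?f"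
    using assms(1) by (intro level_sums_quadratic_identity) auto
  have "?f ?X \<le> 1" "level_sum ?X 1 ?f \<ge> 0" "level_sum ?X 2 ?f \<ge> 0"
    using behavior unfolding behavior_def level_sum_def
    by (force intro: sum_nonneg add_increasing2)+
  moreover have "(real N - 3) * (real N - 2) * level_sum ?X 1 ?f \<ge> 0"
    using assms(1) \<open>level_sum ?X 1 ?f \<ge> 0\<close> by simp
  ultimately have "(real N - 1) * (real N - 2) * (?f {} - level_sum ?X 1 ?f) \<le> 2"
    using identity by linarith
  then have bound: "?f {} - level_sum ?X 1 ?f \<le> 2 / ((real N - 1) * (real N - 2))"
    using assms(1) by (simp add: pos_le_divide_eq mult.commute)
  have "objective N P = (?f {} - level_sum ?X 1 ?f) / (real N + 1)"
    unfolding objective_eq_of_behavior[OF behavior] level_sum_1 ..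
  also have "\<dots> \<le> 2 / ((real N - 1) * (real N - 2)) / (real N + 1)"
    using bound by (rule divide_right_mono) simp
  also have "\<dots> = 2 / ((real N - 2) * (real N - 1) * (real N + 1))"
    by (simp add: mult_ac)
  finally show ?thesis .
qed

(* Vanishes at weights 1 and 2 and equals 1 at weight N, so that every inequality used in
   objective_le_of_J2 is tight. *)
definition optimal_zero_prob :: "nat \<Rightarrow> nat \<Rightarrow> real" where
  "optimal_zero_prob N w = (real w - 1) * (real w - 2) / ((real N - 1) * (real N - 2))"

definition optimal_behavior :: "nat \<Rightarrow> nat \<Rightarrow> nat set \<Rightarrow> real" where
  "optimal_behavior N a x =
     (if a = 0 then optimal_zero_prob N (card x) else 1 - optimal_zero_prob N (card x))"

lemma optimal_zero_prob_bounds: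
  assumes "N \<ge> 3" "w \<le> N"
  shows "0 \<le> optimal_zero_prob N w" "optimal_zero_prob N w \<le> 1"
proof -
  have "0 \<le> (real w - 1) * (real w - 2)"
    by (cases "w \<le> 1") (auto intro: mult_nonpos_nonpos)
  moreover have "(real w - 1) * (real w - 2) \<le> (real N - 1) * (real N - 2)"
  proof (cases "w \<le> 1")
    case True
    then have "(real w - 1) * (real w - 2) \<le> 2"
      by (cases w) auto
    also have "2 \<le> (real N - 1) * (real N - 2)"
      using assms mult_mono[of 2 "real N - 1" 1 "real N - 2"] by simp
    finally show ?thesis .
  next
    case False
    then show ?thesis
      using assms by (intro mult_mono) auto
  qed
  moreover have "(real N - 1) * (real N - 2) > 0"
    using assms by simp
  ultimately show "0 \<le> optimal_zero_prob N w" "optimal_zero_prob N w \<le> 1"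
    by (simp_all add: optimal_zero_prob_def)
qed

lemma optimal_behavior_in_J2:
  assumes "N \<ge> 3"
  shows "optimal_behavior N \<in> J2 N"
proof -
  have "behavior N (optimal_behavior N)"
    unfolding behavior_def optimal_behavior_def
    using optimal_zero_prob_bounds[OF assms] card_mono[OF finite_atLeastAtMost, of _ 1 N]
    by fastforce
  moreover have "(\<Sum>S\<in>Pow J. (-1) ^ card S * optimal_behavior N 0 (R \<union> S)) = 0"
    if "J \<subseteq> {1..N}" "card J > 2" "R \<subseteq> {1..N} - J" for J R
  proof -
    define r where "r = real (card R)"
    define p where "p = smult (1 / ((real N - 1) * (real N - 2))) ([:r - 1, 1:] * [:r - 2, 1:])"
    have "finite J" "finite R"
      using that finite_subset by blast+
    have pointwise: "optimal_behavior N 0 (R \<union> S) = poly p (of_nat (card S))" if "S \<in> Pow J" for S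
    proof -
      have "card (R \<union> S) = card R + card S"
        using that \<open>finite J\<close> \<open>finite R\<close> \<open>R \<subseteq> {1..N} - J\<close>
        by (intro card_Un_disjoint) (auto dest: finite_subset)
      then show ?thesis
        by (simp add: optimal_behavior_def optimal_zero_prob_def p_def r_def algebra_simps
            add_divide_distrib diff_divide_distrib)
    qed
    have "degree p < card J"
      using \<open>card J > 2\<close> degree_mult_le[of "[:r - 1, 1:]" "[:r - 2, 1:]"]
      by (simp add: p_def)
    then have "(\<Sum>S\<in>Pow J. (-1) ^ card S * poly p (of_nat (card S))) = 0"
      using \<open>finite J\<close> by (rule sum_Pow_alternating_poly_card[rotated])
    then show ?thesis
      using pointwise by (metis (no_types, lifting) sum.cong)
  qed
  ultimately show ?thesis
    unfolding J2_def by blast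
qed

lemma objective_optimal_behavior:
  assumes "N \<ge> 3"
  shows "objective N (optimal_behavior N) = 2 / ((real N - 2) * (real N - 1) * (real N + 1))"
proof -
  have "optimal_behavior N 0 {} = 2 / ((real N - 1) * (real N - 2))"
    by (simp add: optimal_behavior_def optimal_zero_prob_def)
  moreover have "optimal_behavior N 1 {k} = 1" for k
    by (simp add: optimal_behavior_def optimal_zero_prob_def)
  ultimately show ?thesis
    by (simp add: objective_def mult_ac)
qed

theorem theorem2:
  fixes N :: nat
  assumes "N > 3"
  shows "(\<forall>P\<in>J2 N. objective N P \<le> 2 / ((real N - 2) * (real N - 1) * (real N + 1)))
       \<and> (\<exists>P\<in>J2 N. objective N P = 2 / ((real N - 2) * (real N - 1) * (real N + 1))
              \<and> P 0 {} = 2 / ((real N)^2 - 3 * real N + 2)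
              \<and> (\<forall>k\<in>{1..N}. P 1 {k} = 1))"
proof -
  have "N \<ge> 3"
    using assms by simp
  have zero_prob: "optimal_behavior N 0 {} = 2 / ((real N)^2 - 3 * real N + 2)"
    by (simp add: optimal_behavior_def optimal_zero_prob_def algebra_simps power2_eq_square)
  have one_prob: "\<forall>k\<in>{1..N}. optimal_behavior N 1 {k} = 1"
    by (simp add: optimal_behavior_def optimal_zero_prob_def)
  show ?thesis
  proof
    show "\<forall>P\<in>J2 N. objective N P \<le> 2 / ((real N - 2) * (real N - 1) * (real N + 1))"
      using objective_le_of_J2[OF \<open>N \<ge> 3\<close>] by blast
    show "\<exists>P\<in>J2 N. objective N P = 2 / ((real N - 2) * (real N - 1) * (real N + 1))
              \<and> P 0 {} = 2 / ((real N)^2 - 3 * real N + 2)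
              \<and> (\<forall>k\<in>{1..N}. P 1 {k} = 1)"
      using optimal_behavior_in_J2[OF \<open>N \<ge> 3\<close>] objective_optimal_behavior[OF \<open>N \<ge> 3\<close>]
        zero_prob one_prob by blast
  qed
qed

end
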